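(* Given a linear-non-linear adjunction $\mathcal F\dashv\mathcal U$, define $\mathcal F^S:S(\mathscr C)\to LS(\mathscr C)$ by $\mathcal F^S(X,J):=(X,\mathcal F(J))$ and, for $(f,u):(X,J)\to(Y,K)$, $\mathcal F^S(f,u):=(f,m_{X,J};\mathcal F(u))$. Then $\mathcal F^S$ is a functor and a split fibred functor from $\mathbf s$ to $\mathbf{ls}$ (i.e. $\mathbf{ls}\circ\mathcal F^S=\mathbf s$ and it preserves the chosen cartesian morphisms). Moreover, on each fibre over $X$ it is a symmetric lax monoidal functor from $(S(\mathscr C)_X,\times_X,(X,I))$ to $(LS(\mathscr C)_X,\otimes_X,(X,1))$, with structure maps $(\mathrm{id}_X,(\mathbf w_X\otimes\mathrm{id}_1);m_1):(X,1)\to\mathcal F^S(X,I)$ and $(\mathrm{id}_X,(\mathbf w_X\otimes\mathrm{id}_{\mathcal F(J)\otimes\mathcal F(K)});m_{J,K}):\mathcal F^S(X,J)\otimes_X\mathcal F^S(X,K)\to\mathcal F^S((X,J)\times_X(X,K))$.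
   Context: Composition is diagrammatic; monoidal categories are strict. A linear-non-linear adjunction is a symmetric monoidal adjunction $\mathcal F\dashv\mathcal U$, $\mathcal F:\mathscr C\to\mathcal L$, between a cartesian category $(\mathscr C,\times,I)$ and a symmetric monoidal category $(\mathcal L,\otimes,1)$ (symmetry $\sigma$); $\mathcal F$ strong monoidal via isomorphisms $m_{X,Y}:\mathcal F(X)\otimes\mathcal F(Y)\to\mathcal F(X\times Y)$, $m_1:1\to\mathcal F(I)$. $\mathbf c_X:=\mathcal F(\Delta_X);m_{X,X}^{-1}$, $\mathbf w_X:=\mathcal F(t_X);m_1^{-1}$ with $t_X:X\to I$ terminal. Simple category $S(\mathscr C)$: objects $(X,J)$; morphisms $(f,u):(X,J)\to(Y,K)$ with $f:X\to Y$, $u:X\times J\to K$; composition $(f,u);(g,v)=(f;g,(\Delta_X\times\mathrm{id}_J);(f\times u);v)$, identity $(\mathrm{id}_X,\pi_2)$; split fibration $\mathbf s(f,u)=f$ with chosen cartesian morphisms $(f,\pi_2):(X,K)\to(Y,K)$; fibre $S(\mathscr C)_X$ has cartesian product $(X,J)\times_X(X,K)=(X,J\times K)$, unit $(X,I)$. Linear simple category $LS(\mathscr C)$: objects $(X,A)$, $X\in\mathscr C,A\in\mathcal L$; morphisms $(f,u):(X,A)\to(Y,B)$ with $f:X\to Y$, $u:\mathcal F(X)\otimes A\to B$; composition $(f,u);(g,v)=(f;g,(\mathbf c_X\otimes\mathrm{id}_A);(\mathcal F(f)\otimes u);v)$, identity $(\mathrm{id}_X,\mathbf w_X\otimes\mathrm{id}_A)$;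 split fibration $\mathbf{ls}(f,u)=f$ with chosen cartesian morphisms $(f,\mathbf w_X\otimes\mathrm{id}_B):(X,B)\to(Y,B)$; fibre $LS(\mathscr C)_X$ (morphisms $(\mathrm{id}_X,u)$) has monoidal structure $(X,A)\otimes_X(X,B)=(X,A\otimes B)$, unit $(X,1)$, $(\mathrm{id}_X,u)\otimes_X(\mathrm{id}_X,v)=(\mathrm{id}_X,(\mathbf c_X\otimes\mathrm{id}_{A\otimes B});(\mathrm{id}_{\mathcal F(X)}\otimes\sigma_{\mathcal F(X),A}\otimes\mathrm{id}_B);(u\otimes v))$. Structure maps are given by their second components (first component $\mathrm{id}_X$). *)

theory Defs
  imports Main
begin

section \<open>Categories (diagrammatic composition: Cmp f g = f;g)\<close>

record ('o,'m) cat =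
  Obj :: "'o set"
  Arr :: "'m set"
  Dom :: "'m \<Rightarrow> 'o"
  Cod :: "'m \<Rightarrow> 'o"
  Idt :: "'o \<Rightarrow> 'm"
  Cmp :: "'m \<Rightarrow> 'm \<Rightarrow> 'm"

record ('o,'m) mcat = "('o,'m) cat" +
  Ten :: "'o \<Rightarrow> 'o \<Rightarrow> 'o"
  TenA :: "'m \<Rightarrow> 'm \<Rightarrow> 'm"
  Unit :: "'o"

record ('o,'m) smcat = "('o,'m) mcat" +
  Sym :: "'o \<Rightarrow> 'o \<Rightarrow> 'm"

text \<open>Strict cartesian categories: the strict monoidal structure is given by
  chosen products (projections Pr1, Pr2, pairing Pair) and terminal object
  Unit (with terminal maps Term).\<close>
record ('o,'m) ccat = "('o,'m) mcat" +
  Pr1 :: "'o \<Rightarrow> 'o \<Rightarrow> 'm"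
  Pr2 :: "'o \<Rightarrow> 'o \<Rightarrow> 'm"
  Pair :: "'m \<Rightarrow> 'm \<Rightarrow> 'm"
  Term :: "'o \<Rightarrow> 'm"

definition hom :: "('o,'m,'z) cat_scheme \<Rightarrow> 'o \<Rightarrow> 'o \<Rightarrow> 'm set" where
  "hom C X Y = {f \<in> Arr C. Dom C f = X \<and> Cod C f = Y}"

definition category :: "('o,'m,'z) cat_scheme \<Rightarrow> bool" where
  "category C \<longleftrightarrow>
    (\<forall>f\<in>Arr C. Dom C f \<in> Obj C \<and> Cod C f \<in> Obj C) \<and>
    (\<forall>X\<in>Obj C. Idt C X \<in> hom C X X) \<and>
    (\<forall>f\<in>Arr C. \<forall>g\<in>Arr C. Cod C f = Dom C g \<longrightarrow> Cmp C f g \<in> hom C (Dom C f) (Cod C g)) \<and>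
    (\<forall>f\<in>Arr C. Cmp C (Idt C (Dom C f)) f = f \<and> Cmp C f (Idt C (Cod C f)) = f) \<and>
    (\<forall>f\<in>Arr C. \<forall>g\<in>Arr C. \<forall>h\<in>Arr C. Cod C f = Dom C g \<longrightarrow> Cod C g = Dom C h \<longrightarrow>
        Cmp C (Cmp C f g) h = Cmp C f (Cmp C g h))"

definition monoidal :: "('o,'m,'z) mcat_scheme \<Rightarrow> bool" where
  "monoidal C \<longleftrightarrow> category C \<and> Unit C \<in> Obj C \<and>
    (\<forall>A\<in>Obj C. \<forall>B\<in>Obj C. Ten C A B \<in> Obj C) \<and>
    (\<forall>f\<in>Arr C. \<forall>g\<in>Arr C.
        TenA C f g \<in> hom C (Ten C (Dom C f) (Dom C g)) (Ten C (Cod C f) (Cod C g))) \<and>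
    (\<forall>A\<in>Obj C. \<forall>B\<in>Obj C. TenA C (Idt C A) (Idt C B) = Idt C (Ten C A B)) \<and>
    (\<forall>f\<in>Arr C. \<forall>g\<in>Arr C. \<forall>f'\<in>Arr C. \<forall>g'\<in>Arr C.
        Cod C f = Dom C g \<longrightarrow> Cod C f' = Dom C g' \<longrightarrow>
        TenA C (Cmp C f g) (Cmp C f' g') = Cmp C (TenA C f f') (TenA C g g')) \<and>
    (\<forall>A\<in>Obj C. \<forall>B\<in>Obj C. \<forall>D\<in>Obj C. Ten C (Ten C A B) D = Ten C A (Ten C B D)) \<and>
    (\<forall>f\<in>Arr C. \<forall>g\<in>Arr C. \<forall>h\<in>Arr C. TenA C (TenA C f g) h = TenA C f (TenA C g h)) \<and>
    (\<forall>A\<in>Obj C. Ten C (Unit C) A = A \<and> Ten C A (Unit C) = A) \<and>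
    (\<forall>f\<in>Arr C. TenA C (Idt C (Unit C)) f = f \<and> TenA C f (Idt C (Unit C)) = f)"

definition symmetric :: "('o,'m,'z) smcat_scheme \<Rightarrow> bool" where
  "symmetric C \<longleftrightarrow> monoidal C \<and>
    (\<forall>A\<in>Obj C. \<forall>B\<in>Obj C. Sym C A B \<in> hom C (Ten C A B) (Ten C B A)) \<and>
    (\<forall>f\<in>Arr C. \<forall>g\<in>Arr C.
        Cmp C (TenA C f g) (Sym C (Cod C f) (Cod C g)) = Cmp C (Sym C (Dom C f) (Dom C g)) (TenA C g f)) \<and>
    (\<forall>A\<in>Obj C. \<forall>B\<in>Obj C. Cmp C (Sym C A B) (Sym C B A) = Idt C (Ten C A B)) \<and>
    (\<forall>A\<in>Obj C. \<forall>B\<in>Obj C. \<forall>D\<in>Obj C.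
        Sym C A (Ten C B D) = Cmp C (TenA C (Sym C A B) (Idt C D)) (TenA C (Idt C B) (Sym C A D)))"

definition cartesian :: "('o,'m,'z) ccat_scheme \<Rightarrow> bool" where
  "cartesian C \<longleftrightarrow> monoidal C \<and>
    (\<forall>A\<in>Obj C. \<forall>B\<in>Obj C. Pr1 C A B \<in> hom C (Ten C A B) A \<and> Pr2 C A B \<in> hom C (Ten C A B) B) \<and>
    (\<forall>f\<in>Arr C. \<forall>g\<in>Arr C. Dom C f = Dom C g \<longrightarrow>
        Pair C f g \<in> hom C (Dom C f) (Ten C (Cod C f) (Cod C g)) \<and>
        Cmp C (Pair C f g) (Pr1 C (Cod C f) (Cod C g)) = f \<and>
        Cmp C (Pair C f g) (Pr2 C (Cod C f) (Cod C g)) = g) \<and>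
    (\<forall>h\<in>Arr C. \<forall>A\<in>Obj C. \<forall>B\<in>Obj C. Cod C h = Ten C A B \<longrightarrow>
        Pair C (Cmp C h (Pr1 C A B)) (Cmp C h (Pr2 C A B)) = h) \<and>
    (\<forall>Z\<in>Obj C. Term C Z \<in> hom C Z (Unit C)) \<and>
    (\<forall>h\<in>Arr C. Cod C h = Unit C \<longrightarrow> h = Term C (Dom C h)) \<and>
    (\<forall>f\<in>Arr C. \<forall>g\<in>Arr C.
        Cmp C (TenA C f g) (Pr1 C (Cod C f) (Cod C g)) = Cmp C (Pr1 C (Dom C f) (Dom C g)) f \<and>
        Cmp C (TenA C f g) (Pr2 C (Cod C f) (Cod C g)) = Cmp C (Pr2 C (Dom C f) (Dom C g)) g) \<and>
    (\<forall>A\<in>Obj C. \<forall>B\<in>Obj C. \<forall>D\<in>Obj C.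
        Pr1 C A (Ten C B D) = Cmp C (Pr1 C (Ten C A B) D) (Pr1 C A B) \<and>
        Cmp C (Pr2 C A (Ten C B D)) (Pr1 C B D) = Cmp C (Pr1 C (Ten C A B) D) (Pr2 C A B) \<and>
        Pr2 C (Ten C A B) D = Cmp C (Pr2 C A (Ten C B D)) (Pr2 C B D)) \<and>
    (\<forall>A\<in>Obj C. Pr1 C A (Unit C) = Idt C A \<and> Pr2 C (Unit C) A = Idt C A)"

definition diag :: "('o,'m,'z) ccat_scheme \<Rightarrow> 'o \<Rightarrow> 'm" where
  "diag C X = Pair C (Idt C X) (Idt C X)"

definition csym :: "('o,'m,'z) ccat_scheme \<Rightarrow> 'o \<Rightarrow> 'o \<Rightarrow> 'm" where
  "csym C A B = Pair C (Pr2 C A B) (Pr1 C A B)"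

definition "functor" :: "('o,'m,'z1) cat_scheme \<Rightarrow> ('p,'n,'z2) cat_scheme \<Rightarrow>
    ('o \<Rightarrow> 'p) \<Rightarrow> ('m \<Rightarrow> 'n) \<Rightarrow> bool" where
  "functor C D Fo Fm \<longleftrightarrow>
    (\<forall>X\<in>Obj C. Fo X \<in> Obj D) \<and>
    (\<forall>f\<in>Arr C. Fm f \<in> hom D (Fo (Dom C f)) (Fo (Cod C f))) \<and>
    (\<forall>X\<in>Obj C. Fm (Idt C X) = Idt D (Fo X)) \<and>
    (\<forall>f\<in>Arr C. \<forall>g\<in>Arr C. Cod C f = Dom C g \<longrightarrow> Fm (Cmp C f g) = Cmp D (Fm f) (Fm g))"

definition sym_lax_monoidal_functor :: "('o,'m,'z1) smcat_scheme \<Rightarrow> ('p,'n,'z2) smcat_scheme \<Rightarrow>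
    ('o \<Rightarrow> 'p) \<Rightarrow> ('m \<Rightarrow> 'n) \<Rightarrow> 'n \<Rightarrow> ('o \<Rightarrow> 'o \<Rightarrow> 'n) \<Rightarrow> bool" where
  "sym_lax_monoidal_functor D E Fo Fm phi0 phi \<longleftrightarrow>
    functor D E Fo Fm \<and>
    phi0 \<in> hom E (Unit E) (Fo (Unit D)) \<and>
    (\<forall>A\<in>Obj D. \<forall>B\<in>Obj D. phi A B \<in> hom E (Ten E (Fo A) (Fo B)) (Fo (Ten D A B))) \<and>
    (\<forall>f\<in>Arr D. \<forall>g\<in>Arr D.
        Cmp E (TenA E (Fm f) (Fm g)) (phi (Cod D f) (Cod D g)) =
        Cmp E (phi (Dom D f) (Dom D g)) (Fm (TenA D f g))) \<and>
    (\<forall>A\<in>Obj D. \<forall>B\<in>Obj D. \<forall>C\<in>Obj D.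
        Cmp E (TenA E (phi A B) (Idt E (Fo C))) (phi (Ten D A B) C) =
        Cmp E (TenA E (Idt E (Fo A)) (phi B C)) (phi A (Ten D B C))) \<and>
    (\<forall>A\<in>Obj D.
        Cmp E (TenA E phi0 (Idt E (Fo A))) (phi (Unit D) A) = Idt E (Fo A) \<and>
        Cmp E (TenA E (Idt E (Fo A)) phi0) (phi A (Unit D)) = Idt E (Fo A)) \<and>
    (\<forall>A\<in>Obj D. \<forall>B\<in>Obj D.
        Cmp E (phi A B) (Fm (Sym D A B)) = Cmp E (Sym E (Fo A) (Fo B)) (phi B A))"

record ('o,'m,'p,'n) lnl_data =
  FO :: "'o \<Rightarrow> 'p"
  FA :: "'m \<Rightarrow> 'n"
  mT :: "'o \<Rightarrow> 'o \<Rightarrow> 'n"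
  mTi :: "'o \<Rightarrow> 'o \<Rightarrow> 'n"
  mU :: "'n"
  mUi :: "'n"
  UO :: "'p \<Rightarrow> 'o"
  UA :: "'n \<Rightarrow> 'm"
  eta :: "'o \<Rightarrow> 'm"
  eps :: "'p \<Rightarrow> 'n"

text \<open>An adjunction F -| U with F strong symmetric monoidal (equivalently, by
  doctrinal adjunction, a symmetric monoidal adjunction), F from a cartesian
  category C to a symmetric monoidal category L.\<close>
definition lnl_adjunction :: "('o,'m,'z1) ccat_scheme \<Rightarrow> ('p,'n,'z2) smcat_scheme \<Rightarrow>
    ('o,'m,'p,'n) lnl_data \<Rightarrow> bool" where
  "lnl_adjunction C L F \<longleftrightarrow>
    cartesian C \<and> symmetric L \<and>
    functor C L (FO F) (FA F) \<and> functor L C (UO F) (UA F) \<and>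
    \<comment> \<open>strong monoidal structure: isomorphisms m_{X,Y} and m_1\<close>
    (\<forall>X\<in>Obj C. \<forall>Y\<in>Obj C.
        mT F X Y \<in> hom L (Ten L (FO F X) (FO F Y)) (FO F (Ten C X Y)) \<and>
        mTi F X Y \<in> hom L (FO F (Ten C X Y)) (Ten L (FO F X) (FO F Y)) \<and>
        Cmp L (mT F X Y) (mTi F X Y) = Idt L (Ten L (FO F X) (FO F Y)) \<and>
        Cmp L (mTi F X Y) (mT F X Y) = Idt L (FO F (Ten C X Y))) \<and>
    mU F \<in> hom L (Unit L) (FO F (Unit C)) \<and>
    mUi F \<in> hom L (FO F (Unit C)) (Unit L) \<and>
    Cmp L (mU F) (mUi F) = Idt L (Unit L) \<and>
    Cmp L (mUi F) (mU F) = Idt L (FO F (Unit C)) \<and>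
    \<comment> \<open>naturality\<close>
    (\<forall>f\<in>Arr C. \<forall>g\<in>Arr C.
        Cmp L (TenA L (FA F f) (FA F g)) (mT F (Cod C f) (Cod C g)) =
        Cmp L (mT F (Dom C f) (Dom C g)) (FA F (TenA C f g))) \<and>
    \<comment> \<open>associativity\<close>
    (\<forall>X\<in>Obj C. \<forall>Y\<in>Obj C. \<forall>Z\<in>Obj C.
        Cmp L (TenA L (mT F X Y) (Idt L (FO F Z))) (mT F (Ten C X Y) Z) =
        Cmp L (TenA L (Idt L (FO F X)) (mT F Y Z)) (mT F X (Ten C Y Z))) \<and>
    \<comment> \<open>unitality\<close>
    (\<forall>X\<in>Obj C.
        Cmp L (TenA L (mU F) (Idt L (FO F X))) (mT F (Unit C) X) = Idt L (FO F X) \<and>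
        Cmp L (TenA L (Idt L (FO F X)) (mU F)) (mT F X (Unit C)) = Idt L (FO F X)) \<and>
    \<comment> \<open>symmetry\<close>
    (\<forall>X\<in>Obj C. \<forall>Y\<in>Obj C.
        Cmp L (mT F X Y) (FA F (csym C X Y)) = Cmp L (Sym L (FO F X) (FO F Y)) (mT F Y X)) \<and>
    \<comment> \<open>adjunction F -| U with unit eta and counit eps\<close>
    (\<forall>X\<in>Obj C. eta F X \<in> hom C X (UO F (FO F X))) \<and>
    (\<forall>A\<in>Obj L. eps F A \<in> hom L (FO F (UO F A)) A) \<and>
    (\<forall>f\<in>Arr C. Cmp C f (eta F (Cod C f)) = Cmp C (eta F (Dom C f)) (UA F (FA F f))) \<and>
    (\<forall>g\<in>Arr L. Cmp L (FA F (UA F g)) (eps F (Cod L g)) = Cmp L (eps F (Dom L g)) g) \<and>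
    (\<forall>X\<in>Obj C. Cmp L (FA F (eta F X)) (eps F (FO F X)) = Idt L (FO F X)) \<and>
    (\<forall>A\<in>Obj L. Cmp C (eta F (UO F A)) (UA F (eps F A)) = Idt C (UO F A))"

definition contr :: "('o,'m,'z1) ccat_scheme \<Rightarrow> ('p,'n,'z2) smcat_scheme \<Rightarrow>
    ('o,'m,'p,'n) lnl_data \<Rightarrow> 'o \<Rightarrow> 'n" where
  "contr C L F X = Cmp L (FA F (diag C X)) (mTi F X X)"

definition weak :: "('o,'m,'z1) ccat_scheme \<Rightarrow> ('p,'n,'z2) smcat_scheme \<Rightarrow>
    ('o,'m,'p,'n) lnl_data \<Rightarrow> 'o \<Rightarrow> 'n" where
  "weak C L F X = Cmp L (FA F (Term C X)) (mUi F)"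

text \<open>A morphism (f,u) : A \<rightarrow> B is represented as the tuple (A, B, f, u).\<close>

definition base_arr :: "'a \<times> 'a \<times> 'm \<times> 'n \<Rightarrow> 'm" where
  "base_arr a = fst (snd (snd a))"

definition SC :: "('o,'m,'z) ccat_scheme \<Rightarrow> ('o \<times> 'o, ('o \<times> 'o) \<times> ('o \<times> 'o) \<times> 'm \<times> 'm) cat" where
  "SC C = \<lparr> Obj = Obj C \<times> Obj C,
     Arr = {((X,J),(Y,K),f,u) | X J Y K f u. X \<in> Obj C \<and> J \<in> Obj C \<and> Y \<in> Obj C \<and> K \<in> Obj C \<and>
              f \<in> hom C X Y \<and> u \<in> hom C (Ten C X J) K},
     Dom = (\<lambda>(A,B,f,u). A),
     Cod = (\<lambda>(A,B,f,u). B),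
     Idt = (\<lambda>(X,J). ((X,J),(X,J), Idt C X, Pr2 C X J)),
     Cmp = (\<lambda>(A,B,f,u) (B',D,g,v). (A, D, Cmp C f g,
              Cmp C (Cmp C (TenA C (diag C (fst A)) (Idt C (snd A))) (TenA C f u)) v)) \<rparr>"

definition LSC :: "('o,'m,'z1) ccat_scheme \<Rightarrow> ('p,'n,'z2) smcat_scheme \<Rightarrow> ('o,'m,'p,'n) lnl_data \<Rightarrow>
    ('o \<times> 'p, ('o \<times> 'p) \<times> ('o \<times> 'p) \<times> 'm \<times> 'n) cat" where
  "LSC C L F = \<lparr> Obj = Obj C \<times> Obj L,
     Arr = {((X,A),(Y,B),f,u) | X A Y B f u. X \<in> Obj C \<and> A \<in> Obj L \<and> Y \<in> Obj C \<and> B \<in> Obj L \<and>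
              f \<in> hom C X Y \<and> u \<in> hom L (Ten L (FO F X) A) B},
     Dom = (\<lambda>(P,Q,f,u). P),
     Cod = (\<lambda>(P,Q,f,u). Q),
     Idt = (\<lambda>(X,A). ((X,A),(X,A), Idt C X, TenA L (weak C L F X) (Idt L A))),
     Cmp = (\<lambda>(P,Q,f,u) (Q',R,g,v). (P, R, Cmp C f g,
              Cmp L (Cmp L (TenA L (contr C L F (fst P)) (Idt L (snd P))) (TenA L (FA F f) u)) v)) \<rparr>"

text \<open>Chosen cartesian morphisms of the split fibrations s and ls\<close>
definition cartS :: "('o,'m,'z) ccat_scheme \<Rightarrow> 'm \<Rightarrow> 'o \<Rightarrow> ('o \<times> 'o) \<times> ('o \<times> 'o) \<times> 'm \<times> 'm" where
  "cartS C f K = ((Dom C f, K), (Cod C f, K), f, Pr2 C (Dom C f) K)"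

definition cartLS :: "('o,'m,'z1) ccat_scheme \<Rightarrow> ('p,'n,'z2) smcat_scheme \<Rightarrow> ('o,'m,'p,'n) lnl_data \<Rightarrow>
    'm \<Rightarrow> 'p \<Rightarrow> ('o \<times> 'p) \<times> ('o \<times> 'p) \<times> 'm \<times> 'n" where
  "cartLS C L F f B = ((Dom C f, B), (Cod C f, B), f, TenA L (weak C L F (Dom C f)) (Idt L B))"

definition fibS :: "('o,'m,'z) ccat_scheme \<Rightarrow> 'o \<Rightarrow>
    ('o \<times> 'o, ('o \<times> 'o) \<times> ('o \<times> 'o) \<times> 'm \<times> 'm) smcat" where
  "fibS C X = \<lparr> Obj = {X} \<times> Obj C,
     Arr = {a \<in> Arr (SC C). fst (Dom (SC C) a) = X \<and> fst (Cod (SC C) a) = X \<and> base_arr a = Idt C X},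
     Dom = Dom (SC C), Cod = Cod (SC C), Idt = Idt (SC C), Cmp = Cmp (SC C),
     Ten = (\<lambda>(X1,J) (X2,K). (X, Ten C J K)),
     TenA = (\<lambda>(A,B,f,u) (A',B',g,v). ((X, Ten C (snd A) (snd A')), (X, Ten C (snd B) (snd B')), Idt C X,
              Cmp C (Cmp C (TenA C (diag C X) (Idt C (Ten C (snd A) (snd A'))))
                           (TenA C (TenA C (Idt C X) (csym C X (snd A))) (Idt C (snd A'))))
                    (TenA C u v))),
     Unit = (X, Unit C),
     Sym = (\<lambda>(X1,J) (X2,K). ((X, Ten C J K), (X, Ten C K J), Idt C X,
              Cmp C (Pr2 C X (Ten C J K)) (csym C J K))) \<rparr>"

definition fibLS :: "('o,'m,'z1) ccat_scheme \<Rightarrow> ('p,'n,'z2) smcat_scheme \<Rightarrow> ('o,'m,'p,'n) lnl_data \<Rightarrow> 'o \<Rightarrow>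
    ('o \<times> 'p, ('o \<times> 'p) \<times> ('o \<times> 'p) \<times> 'm \<times> 'n) smcat" where
  "fibLS C L F X = \<lparr> Obj = {X} \<times> Obj L,
     Arr = {a \<in> Arr (LSC C L F). fst (Dom (LSC C L F) a) = X \<and> fst (Cod (LSC C L F) a) = X \<and>
              base_arr a = Idt C X},
     Dom = Dom (LSC C L F), Cod = Cod (LSC C L F), Idt = Idt (LSC C L F), Cmp = Cmp (LSC C L F),
     Ten = (\<lambda>(X1,A) (X2,B). (X, Ten L A B)),
     TenA = (\<lambda>(P,Q,f,u) (P',Q',g,v). ((X, Ten L (snd P) (snd P')), (X, Ten L (snd Q) (snd Q')), Idt C X,
              Cmp L (Cmp L (TenA L (contr C L F X) (Idt L (Ten L (snd P) (snd P'))))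
                           (TenA L (TenA L (Idt L (FO F X)) (Sym L (FO F X) (snd P))) (Idt L (snd P'))))
                    (TenA L u v))),
     Unit = (X, Unit L),
     Sym = (\<lambda>(X1,A) (X2,B). ((X, Ten L A B), (X, Ten L B A), Idt C X,
              TenA L (weak C L F X) (Sym L A B))) \<rparr>"

definition FSo :: "('o,'m,'p,'n) lnl_data \<Rightarrow> 'o \<times> 'o \<Rightarrow> 'o \<times> 'p" where
  "FSo F = (\<lambda>(X,J). (X, FO F J))"

definition FSm :: "('p,'n,'z) smcat_scheme \<Rightarrow> ('o,'m,'p,'n) lnl_data \<Rightarrow>
    ('o \<times> 'o) \<times> ('o \<times> 'o) \<times> 'm \<times> 'm \<Rightarrow> ('o \<times> 'p) \<times> ('o \<times> 'p) \<times> 'm \<times> 'n" where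
  "FSm L F = (\<lambda>((X,J),(Y,K),f,u). ((X, FO F J), (Y, FO F K), f, Cmp L (mT F X J) (FA F u)))"

definition FS_unit :: "('o,'m,'z1) ccat_scheme \<Rightarrow> ('p,'n,'z2) smcat_scheme \<Rightarrow> ('o,'m,'p,'n) lnl_data \<Rightarrow>
    'o \<Rightarrow> ('o \<times> 'p) \<times> ('o \<times> 'p) \<times> 'm \<times> 'n" where
  "FS_unit C L F X = ((X, Unit L), (X, FO F (Unit C)), Idt C X,
      Cmp L (TenA L (weak C L F X) (Idt L (Unit L))) (mU F))"

definition FS_tensor :: "('o,'m,'z1) ccat_scheme \<Rightarrow> ('p,'n,'z2) smcat_scheme \<Rightarrow> ('o,'m,'p,'n) lnl_data \<Rightarrow>
    'o \<Rightarrow> 'o \<times> 'o \<Rightarrow> 'o \<times> 'o \<Rightarrow> ('o \<times> 'p) \<times> ('o \<times> 'p) \<times> 'm \<times> 'n" where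
  "FS_tensor C L F X = (\<lambda>(X1,J) (X2,K). ((X, Ten L (FO F J) (FO F K)), (X, FO F (Ten C J K)), Idt C X,
      Cmp L (TenA L (weak C L F X) (Idt L (Ten L (FO F J) (FO F K)))) (mT F J K)))"

end

theory Submission
  imports Defs
begin

text \<open>
  All claims reduce to equations in \<open>L\<close> between composites of the coherence maps \<open>m\<close>, of
  \<open>c\<^sub>X = F(\<Delta>\<^sub>X);m\<inverse>\<close>, \<open>w\<^sub>X = F(t\<^sub>X);m\<^sub>1\<inverse>\<close> and of images under \<open>F\<close>; only the strong symmetric
  monoidal structure of \<open>F\<close> is used, never the right adjoint. Since \<open>m\<^bsub>X,J\<^esub>;F(\<pi>\<^sub>2) = w\<^sub>X \<otimes> id\<close>,
  \<open>F\<^sup>S\<close> preserves identities and the chosen cartesian morphisms; preservation of composition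
  follows from naturality and associativity of \<open>m\<close>.

  On the fibre over \<open>X\<close>, every arrow \<open>h\<close> of \<open>L\<close> yields the arrow \<open>(id\<^sub>X, w\<^sub>X \<otimes> h)\<close>, which ignores
  the context. By the counit laws \<open>c\<^sub>X;(w\<^sub>X \<otimes> id) = id = c\<^sub>X;(id \<otimes> w\<^sub>X)\<close> these arrows compose and
  tensor exactly as in \<open>L\<close>. The structure maps of \<open>F\<^sup>S\<close>, the identities and the symmetry of the
  fibre are all of this form, so associativity, unitality and symmetry of \<open>F\<^sup>S\<close> are images of the
  coherence laws of \<open>m\<close>. Only naturality of the tensor structure map requires a genuine
  computation, combining symmetry and associativity of \<open>m\<close> with the diagonal.
\<close>

text \<open>\<open>cat_simps\<close> normalises composites (right-associated, without identities); \<open>cat_typing\<close>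
  discharges the arrow, domain and codomain side conditions these rewrites produce.\<close>
named_theorems cat_typing and cat_simps

locale monoidal_category =
  fixes M :: "('o,'m,'z) mcat_scheme"
  assumes monoidal: "monoidal M"
begin

abbreviation comp (infixl ";;" 55) where "f ;; g \<equiv> Cmp M f g"
abbreviation tensor (infixl "**" 65) where "f ** g \<equiv> TenA M f g"
abbreviation tensor_obj (infixl "\<otimes>" 65) where "A \<otimes> B \<equiv> Ten M A B"
abbreviation "ob A \<equiv> A \<in> Obj M"
abbreviation "ar f \<equiv> f \<in> Arr M"
abbreviation "dm \<equiv> Dom M"
abbreviation "cd \<equiv> Cod M"
abbreviation "idt \<equiv> Idt M"
abbreviation "unit \<equiv> Unit M"

lemma category: "category M"
  using monoidal unfolding monoidal_def by simp

lemma dom_obj[cat_typing]: "ar f \<Longrightarrow> ob (dm f)"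
  and cod_obj[cat_typing]: "ar f \<Longrightarrow> ob (cd f)"
  using category unfolding category_def by auto

lemma id_typing[cat_typing]:
  "ob A \<Longrightarrow> ar (idt A)" "ob A \<Longrightarrow> dm (idt A) = A" "ob A \<Longrightarrow> cd (idt A) = A"
  using category unfolding category_def hom_def by auto

lemma comp_typing[cat_typing]:
  "ar f \<Longrightarrow> ar g \<Longrightarrow> cd f = dm g \<Longrightarrow> ar (f ;; g)"
  "ar f \<Longrightarrow> ar g \<Longrightarrow> cd f = dm g \<Longrightarrow> dm (f ;; g) = dm f"
  "ar f \<Longrightarrow> ar g \<Longrightarrow> cd f = dm g \<Longrightarrow> cd (f ;; g) = cd g"
  using category unfolding category_def hom_def by auto

lemma comp_id_left[cat_simps]: "ar f \<Longrightarrow> dm f = A \<Longrightarrow> idt A ;; f = f"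
  and comp_id_right[cat_simps]: "ar f \<Longrightarrow> cd f = A \<Longrightarrow> f ;; idt A = f"
  using category unfolding category_def by auto

lemma comp_assoc[cat_simps]:
  "ar f \<Longrightarrow> ar g \<Longrightarrow> ar h \<Longrightarrow> cd f = dm g \<Longrightarrow> cd g = dm h \<Longrightarrow> f ;; g ;; h = f ;; (g ;; h)"
  using category unfolding category_def by auto

lemma unit_obj[cat_typing]: "ob unit"
  and tensor_obj[cat_typing]: "ob A \<Longrightarrow> ob B \<Longrightarrow> ob (A \<otimes> B)"
  using monoidal unfolding monoidal_def by auto

lemma tensor_typing[cat_typing]:
  "ar f \<Longrightarrow> ar g \<Longrightarrow> ar (f ** g)"
  "ar f \<Longrightarrow> ar g \<Longrightarrow> dm (f ** g) = dm f \<otimes> dm g"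
  "ar f \<Longrightarrow> ar g \<Longrightarrow> cd (f ** g) = cd f \<otimes> cd g"
  using monoidal unfolding monoidal_def hom_def by auto

lemma tensor_obj_assoc[cat_typing]: "ob A \<Longrightarrow> ob B \<Longrightarrow> ob D \<Longrightarrow> A \<otimes> B \<otimes> D = A \<otimes> (B \<otimes> D)"
  and unit_tensor_obj[cat_typing]: "ob A \<Longrightarrow> unit \<otimes> A = A" "ob A \<Longrightarrow> A \<otimes> unit = A"
  using monoidal unfolding monoidal_def by auto

lemma tensor_id[cat_simps]: "ob A \<Longrightarrow> ob B \<Longrightarrow> idt A ** idt B = idt (A \<otimes> B)"
  and tensor_assoc[cat_simps]: "ar f \<Longrightarrow> ar g \<Longrightarrow> ar h \<Longrightarrow> f ** g ** h = f ** (g ** h)"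
  and unit_tensor[cat_simps]: "ar f \<Longrightarrow> idt unit ** f = f" "ar f \<Longrightarrow> f ** idt unit = f"
  using monoidal unfolding monoidal_def by auto

lemma interchange:
  "ar f \<Longrightarrow> ar g \<Longrightarrow> ar f' \<Longrightarrow> ar g' \<Longrightarrow> cd f = dm g \<Longrightarrow> cd f' = dm g' \<Longrightarrow>
   (f ;; g) ** (f' ;; g') = (f ** f') ;; (g ** g')"
  using monoidal unfolding monoidal_def by auto

lemmas interchange_rev = interchange[symmetric]

lemma interchange_rev_comp:
  "ar f \<Longrightarrow> ar g \<Longrightarrow> ar f' \<Longrightarrow> ar g' \<Longrightarrow> ar h \<Longrightarrow> cd f = dm g \<Longrightarrow> cd f' = dm g' \<Longrightarrow>
   cd g \<otimes> cd g' = dm h \<Longrightarrow> (f ** f') ;; ((g ** g') ;; h) = ((f ;; g) ** (f' ;; g')) ;; h"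
  by (simp add: interchange cat_typing cat_simps)

lemma comp_prefix_cong:
  assumes eq: "f ;; g = f' ;; g'"
    and "ar f" "ar g" "ar f'" "ar g'" "cd f = dm g" "cd f' = dm g'" "ar h" "cd g = dm h"
  shows "f ;; (g ;; h) = f' ;; (g' ;; h)"
proof -
  have "cd g' = cd (f' ;; g')"
    using assms by (simp add: cat_typing)
  also have "\<dots> = cd g"
    using eq assms by (metis comp_typing(3))
  finally show ?thesis
    using eq assms by (metis comp_assoc)
qed

lemma id_tensor_split: "ob A \<Longrightarrow> ob B \<Longrightarrow> ar f \<Longrightarrow> idt (A \<otimes> B) ** f = idt A ** (idt B ** f)"
  by (simp add: tensor_id[symmetric] tensor_assoc cat_typing)

lemma id_tensor_comp:
  "ob A \<Longrightarrow> ar f \<Longrightarrow> ar g \<Longrightarrow> cd f = dm g \<Longrightarrow> idt A ** (f ;; g) = (idt A ** f) ;; (idt A ** g)"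
  using interchange[of "idt A" "idt A" f g] by (simp add: cat_typing cat_simps)

lemma tensor_to_unit_comp:
  assumes "ar a" "cd a = unit" "ar k" "ar h" "cd k = dm h"
  shows "(a ** k) ;; h = a ** (k ;; h)"
proof -
  have "a ** (k ;; h) = (a ;; idt unit) ** (k ;; h)"
    using assms by (simp add: cat_typing cat_simps)
  also have "\<dots> = (a ** k) ;; (idt unit ** h)"
    by (rule interchange) (use assms in \<open>simp_all add: cat_typing\<close>)
  finally show ?thesis
    using assms by (simp add: cat_typing cat_simps)
qed

end

locale symmetric_monoidal_category = monoidal_category M
  for M :: "('o,'m,'z) smcat_scheme" +
  assumes symmetric: "symmetric M"
begin

lemma sym_typing[cat_typing]:
  "ob A \<Longrightarrow> ob B \<Longrightarrow> ar (Sym M A B)"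
  "ob A \<Longrightarrow> ob B \<Longrightarrow> dm (Sym M A B) = A \<otimes> B"
  "ob A \<Longrightarrow> ob B \<Longrightarrow> cd (Sym M A B) = B \<otimes> A"
  using symmetric unfolding symmetric_def hom_def by auto

lemma sym_natural: "ar f \<Longrightarrow> ar g \<Longrightarrow> (f ** g) ;; Sym M (cd f) (cd g) = Sym M (dm f) (dm g) ;; (g ** f)"
  and sym_inverse: "ob A \<Longrightarrow> ob B \<Longrightarrow> Sym M A B ;; Sym M B A = idt (A \<otimes> B)"
  and sym_hexagon: "ob A \<Longrightarrow> ob B \<Longrightarrow> ob D \<Longrightarrow> Sym M A (B \<otimes> D) = (Sym M A B ** idt D) ;; (idt B ** Sym M A D)"
  using symmetric unfolding symmetric_def by auto

lemma sym_unit: "ob A \<Longrightarrow> Sym M A unit = idt A" "ob A \<Longrightarrow> Sym M unit A = idt A"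
proof -
  assume A: "ob A"
  let ?s = "Sym M A unit" and ?t = "Sym M unit A"
  have idem: "?s = ?s ;; ?s"
    using sym_hexagon[of A unit unit] A by (simp add: cat_typing cat_simps)
  have inv: "?s ;; ?t = idt A"
    using sym_inverse[of A unit] A by (simp add: cat_typing)
  have "?s = ?s ;; (?s ;; ?t)"
    using A by (simp add: inv cat_typing cat_simps)
  also have "\<dots> = (?s ;; ?s) ;; ?t"
    using A by (simp add: comp_assoc cat_typing)
  finally show s: "?s = idt A"
    using idem inv by simp
  show "?t = idt A"
    using inv A by (simp add: s cat_typing cat_simps)
qed

end

locale cartesian_category = monoidal_category M
  for M :: "('o,'m,'z) ccat_scheme" +
  assumes cartesian: "cartesian M"
begin

lemma pr_typing[cat_typing]:
  "ob A \<Longrightarrow> ob B \<Longrightarrow> ar (Pr1 M A B)" "ob A \<Longrightarrow> ob B \<Longrightarrow> dm (Pr1 M A B) = A \<otimes> B"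
  "ob A \<Longrightarrow> ob B \<Longrightarrow> cd (Pr1 M A B) = A"
  "ob A \<Longrightarrow> ob B \<Longrightarrow> ar (Pr2 M A B)" "ob A \<Longrightarrow> ob B \<Longrightarrow> dm (Pr2 M A B) = A \<otimes> B"
  "ob A \<Longrightarrow> ob B \<Longrightarrow> cd (Pr2 M A B) = B"
  using cartesian unfolding cartesian_def hom_def by auto

lemma pair_typing[cat_typing]:
  "ar f \<Longrightarrow> ar g \<Longrightarrow> dm f = dm g \<Longrightarrow> ar (Pair M f g)"
  "ar f \<Longrightarrow> ar g \<Longrightarrow> dm f = dm g \<Longrightarrow> dm (Pair M f g) = dm f"
  "ar f \<Longrightarrow> ar g \<Longrightarrow> dm f = dm g \<Longrightarrow> cd (Pair M f g) = cd f \<otimes> cd g"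
  using cartesian unfolding cartesian_def hom_def by auto

lemma term_typing[cat_typing]:
  "ob A \<Longrightarrow> ar (Term M A)" "ob A \<Longrightarrow> dm (Term M A) = A" "ob A \<Longrightarrow> cd (Term M A) = unit"
  using cartesian unfolding cartesian_def hom_def by auto

lemma pair_pr:
  "ar f \<Longrightarrow> ar g \<Longrightarrow> dm f = dm g \<Longrightarrow> Pair M f g ;; Pr1 M (cd f) (cd g) = f"
  "ar f \<Longrightarrow> ar g \<Longrightarrow> dm f = dm g \<Longrightarrow> Pair M f g ;; Pr2 M (cd f) (cd g) = g"
  using cartesian unfolding cartesian_def by auto

lemma pr_natural:
  "ar f \<Longrightarrow> ar g \<Longrightarrow> (f ** g) ;; Pr1 M (cd f) (cd g) = Pr1 M (dm f) (dm g) ;; f"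
  "ar f \<Longrightarrow> ar g \<Longrightarrow> (f ** g) ;; Pr2 M (cd f) (cd g) = Pr2 M (dm f) (dm g) ;; g"
  using cartesian unfolding cartesian_def by auto

lemma pr_unit: "ob A \<Longrightarrow> Pr1 M A unit = idt A" "ob A \<Longrightarrow> Pr2 M unit A = idt A"
  using cartesian unfolding cartesian_def by auto

lemma diag_typing[cat_typing]:
  "ob X \<Longrightarrow> ar (diag M X)" "ob X \<Longrightarrow> dm (diag M X) = X" "ob X \<Longrightarrow> cd (diag M X) = X \<otimes> X"
  unfolding diag_def by (simp_all add: cat_typing)

lemma csym_typing[cat_typing]:
  "ob X \<Longrightarrow> ob Y \<Longrightarrow> ar (csym M X Y)" "ob X \<Longrightarrow> ob Y \<Longrightarrow> dm (csym M X Y) = X \<otimes> Y"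
  "ob X \<Longrightarrow> ob Y \<Longrightarrow> cd (csym M X Y) = Y \<otimes> X"
  unfolding csym_def by (simp_all add: cat_typing)

lemma pr1_eq_tensor_term: "ob X \<Longrightarrow> ob J \<Longrightarrow> Pr1 M X J = idt X ** Term M J"
  using pr_natural(1)[of "idt X" "Term M J"] by (simp add: cat_typing cat_simps pr_unit)

lemma pr2_eq_term_tensor: "ob X \<Longrightarrow> ob J \<Longrightarrow> Pr2 M X J = Term M X ** idt J"
  using pr_natural(2)[of "Term M X" "idt J"] by (simp add: cat_typing cat_simps pr_unit)

lemma diag_pr: "ob X \<Longrightarrow> diag M X ;; Pr1 M X X = idt X" "ob X \<Longrightarrow> diag M X ;; Pr2 M X X = idt X"
  unfolding diag_def using pair_pr[of "idt X" "idt X"] by (simp_all add: cat_typing)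

end

locale strong_sym_monoidal_functor =
  C: cartesian_category C + L: symmetric_monoidal_category L
  for C :: "('o,'m,'z1) ccat_scheme" and L :: "('p,'n,'z2) smcat_scheme" +
  fixes F :: "('o,'m,'p,'n) lnl_data"
  assumes functor_F: "functor C L (FO F) (FA F)"
    and mT_hom: "X \<in> Obj C \<Longrightarrow> Y \<in> Obj C \<Longrightarrow>
      mT F X Y \<in> hom L (Ten L (FO F X) (FO F Y)) (FO F (Ten C X Y))"
    and mTi_hom: "X \<in> Obj C \<Longrightarrow> Y \<in> Obj C \<Longrightarrow>
      mTi F X Y \<in> hom L (FO F (Ten C X Y)) (Ten L (FO F X) (FO F Y))"
    and mT_mTi: "X \<in> Obj C \<Longrightarrow> Y \<in> Obj C \<Longrightarrow>
      Cmp L (mT F X Y) (mTi F X Y) = Idt L (Ten L (FO F X) (FO F Y))"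
    and mTi_mT: "X \<in> Obj C \<Longrightarrow> Y \<in> Obj C \<Longrightarrow>
      Cmp L (mTi F X Y) (mT F X Y) = Idt L (FO F (Ten C X Y))"
    and mU_hom: "mU F \<in> hom L (Unit L) (FO F (Unit C))"
    and mUi_hom: "mUi F \<in> hom L (FO F (Unit C)) (Unit L)"
    and mU_mUi: "Cmp L (mU F) (mUi F) = Idt L (Unit L)"
    and mUi_mU: "Cmp L (mUi F) (mU F) = Idt L (FO F (Unit C))"
    and mT_natural: "f \<in> Arr C \<Longrightarrow> g \<in> Arr C \<Longrightarrow>
      Cmp L (TenA L (FA F f) (FA F g)) (mT F (Cod C f) (Cod C g)) =
      Cmp L (mT F (Dom C f) (Dom C g)) (FA F (TenA C f g))"
    and mT_assoc: "X \<in> Obj C \<Longrightarrow> Y \<in> Obj C \<Longrightarrow> Z \<in> Obj C \<Longrightarrow>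
      Cmp L (TenA L (mT F X Y) (Idt L (FO F Z))) (mT F (Ten C X Y) Z) =
      Cmp L (TenA L (Idt L (FO F X)) (mT F Y Z)) (mT F X (Ten C Y Z))"
    and mT_unit_left: "X \<in> Obj C \<Longrightarrow>
      Cmp L (TenA L (mU F) (Idt L (FO F X))) (mT F (Unit C) X) = Idt L (FO F X)"
    and mT_unit_right: "X \<in> Obj C \<Longrightarrow>
      Cmp L (TenA L (Idt L (FO F X)) (mU F)) (mT F X (Unit C)) = Idt L (FO F X)"
    and mT_sym: "X \<in> Obj C \<Longrightarrow> Y \<in> Obj C \<Longrightarrow>
      Cmp L (mT F X Y) (FA F (csym C X Y)) = Cmp L (Sym L (FO F X) (FO F Y)) (mT F Y X)"

lemma lnl_adjunction_strong_sym_monoidal: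
  assumes "lnl_adjunction C L F"
  shows "strong_sym_monoidal_functor C L F"
  using assms unfolding lnl_adjunction_def
  by unfold_locales (auto simp: cartesian_def symmetric_def)

context strong_sym_monoidal_functor
begin

abbreviation compL (infixl ";;" 55) where "f ;; g \<equiv> Cmp L f g"
abbreviation tensorL (infixl "**" 65) where "f ** g \<equiv> TenA L f g"
abbreviation tensor_objL (infixl "\<otimes>" 65) where "A \<otimes> B \<equiv> Ten L A B"
abbreviation compC (infixl ";c" 55) where "f ;c g \<equiv> Cmp C f g"
abbreviation tensorC (infixl "*c" 65) where "f *c g \<equiv> TenA C f g"
abbreviation tensor_objC (infixl "\<times>c" 65) where "A \<times>c B \<equiv> Ten C A B"
abbreviation "ob A \<equiv> A \<in> Obj L"
abbreviation "ar f \<equiv> f \<in> Arr L"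
abbreviation "dm \<equiv> Dom L"
abbreviation "cd \<equiv> Cod L"
abbreviation "idL \<equiv> Idt L"
abbreviation "obC A \<equiv> A \<in> Obj C"
abbreviation "arC f \<equiv> f \<in> Arr C"
abbreviation "dmC \<equiv> Dom C"
abbreviation "cdC \<equiv> Cod C"
abbreviation "idC \<equiv> Idt C"
abbreviation "I \<equiv> Unit C"
abbreviation one ("\<one>") where "\<one> \<equiv> Unit L"
abbreviation "FO' \<equiv> FO F"
abbreviation "FA' \<equiv> FA F"
abbreviation "wk X \<equiv> weak C L F X"
abbreviation "ctr X \<equiv> contr C L F X"

lemma FO_obj[cat_typing]: "obC X \<Longrightarrow> ob (FO' X)"
  using functor_F unfolding functor_def by auto

lemma FA_typing[cat_typing]:
  "arC f \<Longrightarrow> ar (FA' f)" "arC f \<Longrightarrow> dm (FA' f) = FO' (dmC f)" "arC f \<Longrightarrow> cd (FA' f) = FO' (cdC f)"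
  using functor_F unfolding functor_def hom_def by auto

lemma FA_id[cat_simps]: "obC X \<Longrightarrow> FA' (idC X) = idL (FO' X)"
  and FA_comp: "arC f \<Longrightarrow> arC g \<Longrightarrow> cdC f = dmC g \<Longrightarrow> FA' (f ;c g) = FA' f ;; FA' g"
  using functor_F unfolding functor_def by auto

lemma mT_typing[cat_typing]:
  "obC X \<Longrightarrow> obC Y \<Longrightarrow> ar (mT F X Y)"
  "obC X \<Longrightarrow> obC Y \<Longrightarrow> dm (mT F X Y) = FO' X \<otimes> FO' Y"
  "obC X \<Longrightarrow> obC Y \<Longrightarrow> cd (mT F X Y) = FO' (X \<times>c Y)"
  "obC X \<Longrightarrow> obC Y \<Longrightarrow> ar (mTi F X Y)"
  "obC X \<Longrightarrow> obC Y \<Longrightarrow> dm (mTi F X Y) = FO' (X \<times>c Y)"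
  "obC X \<Longrightarrow> obC Y \<Longrightarrow> cd (mTi F X Y) = FO' X \<otimes> FO' Y"
  using mT_hom mTi_hom unfolding hom_def by auto

lemma mU_typing[cat_typing]:
  "ar (mU F)" "dm (mU F) = \<one>" "cd (mU F) = FO' I"
  "ar (mUi F)" "dm (mUi F) = FO' I" "cd (mUi F) = \<one>"
  using mU_hom mUi_hom unfolding hom_def by auto

lemma wk_typing[cat_typing]: "obC X \<Longrightarrow> ar (wk X)" "obC X \<Longrightarrow> dm (wk X) = FO' X" "obC X \<Longrightarrow> cd (wk X) = \<one>"
  unfolding weak_def by (simp_all add: cat_typing)

lemma ctr_typing[cat_typing]:
  "obC X \<Longrightarrow> ar (ctr X)" "obC X \<Longrightarrow> dm (ctr X) = FO' X" "obC X \<Longrightarrow> cd (ctr X) = FO' X \<otimes> FO' X"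
  unfolding contr_def by (simp_all add: cat_typing)

lemma mT_unit_left_eq: "obC J \<Longrightarrow> mT F I J = mUi F ** idL (FO' J)"
proof -
  assume J: "obC J"
  have "mUi F ** idL (FO' J) = (mUi F ** idL (FO' J)) ;; ((mU F ** idL (FO' J)) ;; mT F I J)"
    using J by (simp add: mT_unit_left cat_typing cat_simps)
  also have "\<dots> = mT F I J"
    using J by (simp add: L.interchange_rev_comp mUi_mU cat_typing cat_simps)
  finally show ?thesis by simp
qed

lemma mT_unit_right_eq: "obC J \<Longrightarrow> mT F J I = idL (FO' J) ** mUi F"
proof -
  assume J: "obC J"
  have "idL (FO' J) ** mUi F = (idL (FO' J) ** mUi F) ;; ((idL (FO' J) ** mU F) ;; mT F J I)"
    using J by (simp add: mT_unit_right cat_typing cat_simps)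
  also have "\<dots> = mT F J I"
    using J by (simp add: L.interchange_rev_comp mUi_mU cat_typing cat_simps)
  finally show ?thesis by simp
qed

lemma mT_FA_pr1: "obC X \<Longrightarrow> obC J \<Longrightarrow> mT F X J ;; FA' (Pr1 C X J) = idL (FO' X) ** wk J"
  using mT_natural[of "idC X" "Term C J"]
  by (simp add: C.pr1_eq_tensor_term mT_unit_right_eq L.interchange_rev weak_def cat_typing cat_simps)

lemma mT_FA_pr2: "obC X \<Longrightarrow> obC J \<Longrightarrow> mT F X J ;; FA' (Pr2 C X J) = wk X ** idL (FO' J)"
  using mT_natural[of "Term C X" "idC J"]
  by (simp add: C.pr2_eq_term_tensor mT_unit_left_eq L.interchange_rev weak_def cat_typing cat_simps)

lemma ctr_wk_left: "obC X \<Longrightarrow> ctr X ;; (idL (FO' X) ** wk X) = idL (FO' X)"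
proof -
  assume X: "obC X"
  have "ctr X ;; (idL (FO' X) ** wk X) = FA' (diag C X) ;; (mTi F X X ;; mT F X X) ;; FA' (Pr1 C X X)"
    using X by (simp add: contr_def mT_FA_pr1[symmetric] cat_typing cat_simps)
  also have "\<dots> = FA' (diag C X ;c Pr1 C X X)"
    using X by (simp add: mTi_mT FA_comp cat_typing cat_simps)
  finally show ?thesis
    using X by (simp add: C.diag_pr cat_simps)
qed

lemma ctr_wk_right: "obC X \<Longrightarrow> ctr X ;; (wk X ** idL (FO' X)) = idL (FO' X)"
proof -
  assume X: "obC X"
  have "ctr X ;; (wk X ** idL (FO' X)) = FA' (diag C X) ;; (mTi F X X ;; mT F X X) ;; FA' (Pr2 C X X)"
    using X by (simp add: contr_def mT_FA_pr2[symmetric] cat_typing cat_simps)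
  also have "\<dots> = FA' (diag C X ;c Pr2 C X X)"
    using X by (simp add: mTi_mT FA_comp cat_typing cat_simps)
  finally show ?thesis
    using X by (simp add: C.diag_pr cat_simps)
qed

lemma ctr_wk_wk: "obC X \<Longrightarrow> ctr X ;; (wk X ** wk X) = wk X"
proof -
  assume X: "obC X"
  have "wk X ** wk X = (wk X ** idL (FO' X)) ;; wk X"
    using L.interchange[of "wk X" "idL \<one>" "idL (FO' X)" "wk X"] X by (simp add: cat_typing cat_simps)
  then have "ctr X ;; (wk X ** wk X) = (ctr X ;; (wk X ** idL (FO' X))) ;; wk X"
    using X by (simp add: cat_typing cat_simps)
  then show ?thesis
    using X by (simp add: ctr_wk_right cat_typing cat_simps)
qed

lemma mT_FA_simple_comp:
  assumes X: "obC X" and J: "obC J" and Y: "obC Y" and K: "obC K"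
    and f: "arC f" "dmC f = X" "cdC f = Y" and u: "arC u" "dmC u = X \<times>c J" "cdC u = K"
    and v: "arC v" "dmC v = Y \<times>c K"
  shows "mT F X J ;; FA' ((diag C X *c idC J) ;c (f *c u) ;c v)
    = ctr X ** idL (FO' J) ;; (FA' f ** (mT F X J ;; FA' u)) ;; (mT F Y K ;; FA' v)"
proof -
  note facts = X J Y K f u v
  have diag_natural: "mT F X J ;; FA' (diag C X *c idC J) = (FA' (diag C X) ** idL (FO' J)) ;; mT F (X \<times>c X) J"
    using mT_natural[of "diag C X" "idC J"] facts by (simp add: cat_typing cat_simps)
  have split_XX: "mT F (X \<times>c X) J = (mTi F X X ** idL (FO' J)) ;; ((idL (FO' X) ** mT F X J) ;; mT F X (X \<times>c J))"
  proof -
    have "mT F (X \<times>c X) J = ((mTi F X X ;; mT F X X) ** (idL (FO' J) ;; idL (FO' J))) ;; mT F (X \<times>c X) J"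
      using facts by (simp add: mTi_mT cat_typing cat_simps)
    also have "\<dots> = (mTi F X X ** idL (FO' J)) ;; ((mT F X X ** idL (FO' J)) ;; mT F (X \<times>c X) J)"
      by (subst L.interchange_rev_comp) (use facts in \<open>simp_all add: cat_typing\<close>)
    finally show ?thesis
      using mT_assoc[of X X J] facts by (simp add: cat_typing)
  qed
  have fu_natural: "mT F X (X \<times>c J) ;; FA' (f *c u) = (FA' f ** FA' u) ;; mT F Y K"
    using mT_natural[of f u] facts by (simp add: cat_typing)
  have "mT F X J ;; FA' ((diag C X *c idC J) ;c (f *c u) ;c v)
     = mT F X J ;; (FA' (diag C X *c idC J) ;; (FA' (f *c u) ;; FA' v))"
    using facts by (simp add: FA_comp cat_typing cat_simps)
  also have "\<dots> = (FA' (diag C X) ** idL (FO' J)) ;; (mT F (X \<times>c X) J ;; (FA' (f *c u) ;; FA' v))"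
    using facts by (simp add: L.comp_prefix_cong[OF diag_natural] cat_typing)
  also have "\<dots> = (FA' (diag C X) ** idL (FO' J)) ;; ((mTi F X X ** idL (FO' J)) ;;
      ((idL (FO' X) ** mT F X J) ;; (mT F X (X \<times>c J) ;; (FA' (f *c u) ;; FA' v))))"
    unfolding split_XX using facts by (simp add: cat_typing cat_simps)
  also have "\<dots> = (FA' (diag C X) ** idL (FO' J)) ;; ((mTi F X X ** idL (FO' J)) ;;
      ((idL (FO' X) ** mT F X J) ;; ((FA' f ** FA' u) ;; (mT F Y K ;; FA' v))))"
    using facts by (simp add: L.comp_prefix_cong[OF fu_natural] cat_typing)
  also have "\<dots> = ctr X ** idL (FO' J) ;; (FA' f ** (mT F X J ;; FA' u)) ;; (mT F Y K ;; FA' v)"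
    using facts by (simp add: L.interchange_rev_comp contr_def cat_typing cat_simps)
  finally show ?thesis .
qed

abbreviation "mT3 X J K \<equiv> (idL (FO' X) ** mT F J K) ;; mT F X (J \<times>c K)"

lemma mT_tensor_mT: "obC X \<Longrightarrow> obC J \<Longrightarrow> obC K \<Longrightarrow>
  (mT F X J ** mT F X K) ;; mT F (X \<times>c J) (X \<times>c K) =
  (idL (FO' X) ** mT3 J X K) ;; mT F X (J \<times>c (X \<times>c K))"
proof -
  assume X: "obC X" and J: "obC J" and K: "obC K"
  have split_tensor: "mT F X J ** mT F X K = (idL (FO' X \<otimes> FO' J) ** mT F X K) ;; (mT F X J ** idL (FO' (X \<times>c K)))"
    using L.interchange[of "idL (FO' X \<otimes> FO' J)" "mT F X J" "mT F X K" "idL (FO' (X \<times>c K))"] X J K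
    by (simp add: cat_typing cat_simps)
  have assoc_XJ: "(mT F X J ** idL (FO' (X \<times>c K))) ;; mT F (X \<times>c J) (X \<times>c K)
     = (idL (FO' X) ** mT F J (X \<times>c K)) ;; mT F X (J \<times>c (X \<times>c K))"
    using mT_assoc[of X J "X \<times>c K"] X J K by (simp add: cat_typing)
  have "(mT F X J ** mT F X K) ;; mT F (X \<times>c J) (X \<times>c K) =
     (idL (FO' X \<otimes> FO' J) ** mT F X K) ;; ((mT F X J ** idL (FO' (X \<times>c K))) ;; mT F (X \<times>c J) (X \<times>c K))"
    unfolding split_tensor by (rule L.comp_assoc) (use X J K in \<open>simp_all add: cat_typing cat_simps\<close>)
  also have "\<dots> = (idL (FO' X \<otimes> FO' J) ** mT F X K) ;; ((idL (FO' X) ** mT F J (X \<times>c K)) ;; mT F X (J \<times>c (X \<times>c K)))"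
    by (simp only: assoc_XJ)
  also have "\<dots> = (idL (FO' X) ** (idL (FO' J) ** mT F X K)) ;; ((idL (FO' X) ** mT F J (X \<times>c K)) ;; mT F X (J \<times>c (X \<times>c K)))"
    using X J K by (simp add: L.id_tensor_split cat_typing)
  also have "\<dots> = (idL (FO' X) ** mT3 J X K) ;; mT F X (J \<times>c (X \<times>c K))"
    by (subst L.interchange_rev_comp) (use X J K in \<open>simp_all add: cat_typing cat_simps\<close>)
  finally show ?thesis .
qed

lemma sym_mT3: "obC X \<Longrightarrow> obC J \<Longrightarrow> obC K \<Longrightarrow>
  (Sym L (FO' X) (FO' J) ** idL (FO' K)) ;; mT3 J X K =
  mT3 X J K ;; FA' (csym C X J *c idC K)"
proof -
  assume X: "obC X" and J: "obC J" and K: "obC K"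
  have assoc_JX: "mT3 J X K = (mT F J X ** idL (FO' K)) ;; mT F (J \<times>c X) K"
    using mT_assoc[of J X K] X J K by (simp add: cat_typing)
  have assoc_XJ: "mT3 X J K = (mT F X J ** idL (FO' K)) ;; mT F (X \<times>c J) K"
    using mT_assoc[of X J K] X J K by (simp add: cat_typing)
  have csym_natural: "(FA' (csym C X J) ** FA' (idC K)) ;; mT F (J \<times>c X) K = mT F (X \<times>c J) K ;; FA' (csym C X J *c idC K)"
    using mT_natural[of "csym C X J" "idC K"] X J K by (simp add: cat_typing)
  have "(Sym L (FO' X) (FO' J) ** idL (FO' K)) ;; mT3 J X K
     = ((Sym L (FO' X) (FO' J) ;; mT F J X) ** idL (FO' K)) ;; mT F (J \<times>c X) K"
    unfolding assoc_JX by (subst L.interchange_rev_comp) (use X J K in \<open>simp_all add: cat_typing cat_simps\<close>)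
  also have "\<dots> = ((mT F X J ;; FA' (csym C X J)) ** (idL (FO' K) ;; FA' (idC K))) ;; mT F (J \<times>c X) K"
    using X J K by (simp add: mT_sym cat_typing cat_simps)
  also have "\<dots> = (mT F X J ** idL (FO' K)) ;; ((FA' (csym C X J) ** FA' (idC K)) ;; mT F (J \<times>c X) K)"
    by (subst L.interchange_rev_comp[symmetric]) (use X J K in \<open>simp_all add: cat_typing\<close>)
  also have "\<dots> = mT3 X J K ;; FA' (csym C X J *c idC K)"
    unfolding csym_natural assoc_XJ by (rule L.comp_assoc[symmetric]) (use X J K in \<open>simp_all add: cat_typing cat_simps\<close>)
  finally show ?thesis .
qed

lemma mT_natural_right: "obC X \<Longrightarrow> arC g \<Longrightarrow>
  (idL (FO' X) ** FA' g) ;; mT F X (cdC g) = mT F X (dmC g) ;; FA' (idC X *c g)"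
  using mT_natural[of "idC X" g] by (simp add: cat_typing cat_simps)

lemma ctr_mT3: "obC X \<Longrightarrow> obC J \<Longrightarrow> obC K \<Longrightarrow>
  ctr X ** idL (FO' J \<otimes> FO' K) ;; ((idL (FO' X) ** mT3 X J K) ;; mT F X (X \<times>c (J \<times>c K)))
  = (idL (FO' X) ** mT F J K) ;; (mT F X (J \<times>c K) ;; FA' (diag C X *c idC (J \<times>c K)))"
proof -
  assume X: "obC X" and J: "obC J" and K: "obC K"
  let ?FX = "FO' X" and ?JK = "J \<times>c K"
  have assoc_XX: "(idL ?FX ** mT F X ?JK) ;; mT F X (X \<times>c ?JK) = (mT F X X ** idL (FO' ?JK)) ;; mT F (X \<times>c X) ?JK"
    using mT_assoc[of X X ?JK] X J K by (simp add: cat_typing)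
  have split_id_tensor: "idL ?FX ** mT3 X J K = (idL (?FX \<otimes> ?FX) ** mT F J K) ;; (idL ?FX ** mT F X ?JK)"
    using L.interchange[of "idL ?FX" "idL ?FX" "idL ?FX ** mT F J K" "mT F X ?JK"] X J K by (simp add: cat_typing cat_simps L.id_tensor_split)
  have ctr_slide: "ctr X ** idL (FO' J \<otimes> FO' K) ;; (idL (?FX \<otimes> ?FX) ** mT F J K) = (idL ?FX ** mT F J K) ;; (ctr X ** idL (FO' ?JK))"
    using X J K by (simp add: L.interchange_rev cat_typing cat_simps L.tensor_id)
  have diag_natural: "(FA' (diag C X) ** FA' (idC ?JK)) ;; mT F (X \<times>c X) ?JK = mT F X ?JK ;; FA' (diag C X *c idC ?JK)"
    using mT_natural[of "diag C X" "idC ?JK"] X J K by (simp add: cat_typing)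
  have "ctr X ** idL (FO' J \<otimes> FO' K) ;; ((idL ?FX ** mT3 X J K) ;; mT F X (X \<times>c ?JK))
     = ctr X ** idL (FO' J \<otimes> FO' K) ;; ((idL (?FX \<otimes> ?FX) ** mT F J K) ;; ((mT F X X ** idL (FO' ?JK)) ;; mT F (X \<times>c X) ?JK))"
    unfolding split_id_tensor using X J K by (simp add: assoc_XX[symmetric] cat_typing cat_simps)
  also have "\<dots> = (idL ?FX ** mT F J K) ;; ((ctr X ** idL (FO' ?JK)) ;; ((mT F X X ** idL (FO' ?JK)) ;; mT F (X \<times>c X) ?JK))"
    by (rule L.comp_prefix_cong[OF ctr_slide]) (use X J K in \<open>simp_all add: cat_typing cat_simps\<close>)
  also have "\<dots> = (idL ?FX ** mT F J K) ;; ((FA' (diag C X) ** FA' (idC ?JK)) ;; mT F (X \<times>c X) ?JK)"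
    using X J K by (simp add: L.interchange_rev_comp contr_def cat_typing cat_simps mTi_mT)
  also have "\<dots> = (idL (FO' X) ** mT F J K) ;; (mT F X (J \<times>c K) ;; FA' (diag C X *c idC (J \<times>c K)))"
    by (simp only: diag_natural)
  finally show ?thesis .
qed

lemma mT_tensor_mT_swap:
  assumes X: "obC X" and J: "obC J" and K: "obC K"
  shows "(idL (FO' X) ** (Sym L (FO' X) (FO' J) ** idL (FO' K))) ;; ((mT F X J ** mT F X K) ;; mT F (X \<times>c J) (X \<times>c K))
    = (idL (FO' X) ** mT3 X J K) ;; (mT F X (X \<times>c (J \<times>c K)) ;; FA' (idC X *c (csym C X J *c idC K)))"
proof -
  let ?s = "Sym L (FO' X) (FO' J)" and ?FX = "FO' X" and ?g = "csym C X J *c idC K"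
  note facts = X J K
  have "(idL ?FX ** (?s ** idL (FO' K))) ;; ((mT F X J ** mT F X K) ;; mT F (X \<times>c J) (X \<times>c K))
      = (idL ?FX ** (?s ** idL (FO' K))) ;; ((idL ?FX ** mT3 J X K) ;; mT F X (J \<times>c (X \<times>c K)))"
    using facts by (simp only: mT_tensor_mT)
  also have "\<dots> = (idL ?FX ** ((?s ** idL (FO' K)) ;; mT3 J X K)) ;; mT F X (J \<times>c (X \<times>c K))"
    by (subst L.interchange_rev_comp) (use facts in \<open>simp_all add: cat_typing cat_simps\<close>)
  also have "\<dots> = (idL ?FX ** (mT3 X J K ;; FA' ?g)) ;; mT F X (J \<times>c (X \<times>c K))"
    using facts by (simp only: sym_mT3)
  also have "\<dots> = (idL ?FX ** mT3 X J K) ;; ((idL ?FX ** FA' ?g) ;; mT F X (J \<times>c (X \<times>c K)))"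
    using facts by (simp add: L.id_tensor_comp cat_typing cat_simps)
  also have "\<dots> = (idL ?FX ** mT3 X J K) ;; (mT F X (X \<times>c (J \<times>c K)) ;; FA' (idC X *c ?g))"
    using mT_natural_right[of X ?g] facts by (simp add: cat_typing)
  finally show ?thesis .
qed

lemma mT_FA_fibre_tensor:
  assumes X: "obC X" and J: "obC J" and K: "obC K" and J': "obC J'" and K': "obC K'"
    and u: "arC u" "dmC u = X \<times>c J" "cdC u = J'" and v: "arC v" "dmC v = X \<times>c K" "cdC v = K'"
  shows "ctr X ** idL (FO' J \<otimes> FO' K) ;; ((idL (FO' X) ** Sym L (FO' X) (FO' J)) ** idL (FO' K))
          ;; ((mT F X J ;; FA' u) ** (mT F X K ;; FA' v)) ;; mT F J' K'
   = (idL (FO' X) ** mT F J K) ;; (mT F X (J \<times>c K) ;;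
       FA' (((diag C X *c idC (J \<times>c K)) ;c ((idC X *c csym C X J) *c idC K)) ;c (u *c v)))"
proof -
  let ?c = "ctr X ** idL (FO' J \<otimes> FO' K)" and ?FX = "FO' X"
  let ?g = "csym C X J *c idC K" and ?uv = "FA' (u *c v)"
  note facts = X J K J' K' u v
  have "(FA' u ** FA' v) ;; mT F J' K' = mT F (X \<times>c J) (X \<times>c K) ;; ?uv"
    using mT_natural[of u v] facts by simp
  then have "?c ;; ((idL ?FX ** Sym L ?FX (FO' J)) ** idL (FO' K))
          ;; ((mT F X J ;; FA' u) ** (mT F X K ;; FA' v)) ;; mT F J' K'
     = ?c ;; (((idL ?FX ** (Sym L ?FX (FO' J) ** idL (FO' K))) ;;
          ((mT F X J ** mT F X K) ;; mT F (X \<times>c J) (X \<times>c K))) ;; ?uv)"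
    using facts by (simp add: L.interchange cat_typing cat_simps)
  also have "\<dots> = ?c ;; (((idL ?FX ** mT3 X J K) ;; (mT F X (X \<times>c (J \<times>c K)) ;; FA' (idC X *c ?g))) ;; ?uv)"
    using facts by (simp only: mT_tensor_mT_swap)
  also have "\<dots> = (?c ;; ((idL ?FX ** mT3 X J K) ;; mT F X (X \<times>c (J \<times>c K)))) ;; (FA' (idC X *c ?g) ;; ?uv)"
    using facts by (simp add: cat_typing cat_simps)
  also have "\<dots> = ((idL ?FX ** mT F J K) ;; (mT F X (J \<times>c K) ;; FA' (diag C X *c idC (J \<times>c K)))) ;; (FA' (idC X *c ?g) ;; ?uv)"
    using facts by (simp only: ctr_mT3)
  finally show ?thesis
    using facts by (simp add: FA_comp cat_typing cat_simps)
qed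

definition fibre_const :: "'o \<Rightarrow> 'n \<Rightarrow> ('o \<times> 'p) \<times> ('o \<times> 'p) \<times> 'm \<times> 'n" where
  "fibre_const X h = ((X, dm h), (X, cd h), idC X, wk X ** h)"

lemma fibre_const_comp_right:
  assumes X: "obC X" and A: "ob A" and a: "ar a" "dm a = FO' X \<otimes> A" and h: "ar h" "dm h = cd a"
  shows "Cmp (fibLS C L F X) ((X, A), (X, B), idC X, a) (fibre_const X h) = ((X, A), (X, cd h), idC X, a ;; h)"
proof -
  note facts = X A a h
  have "ctr X ** idL A ;; (idL (FO' X) ** a) ;; (wk X ** h) = ctr X ** idL A ;; (wk X ** (a ;; h))"
    using facts by (simp add: L.interchange_rev cat_typing cat_simps)
  also have "\<dots> = ctr X ** idL A ;; ((wk X ** idL (FO' X) ** idL A) ;; (a ;; h))"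
    using L.tensor_to_unit_comp[of "wk X" "idL (FO' X \<otimes> A)" "a ;; h"] facts
    by (simp add: cat_typing cat_simps)
  also have "\<dots> = a ;; h"
    by (subst L.interchange_rev_comp) (use facts in \<open>simp_all add: ctr_wk_right cat_typing cat_simps\<close>)
  finally show ?thesis
    using facts by (simp add: fibLS_def LSC_def fibre_const_def cat_typing cat_simps)
qed

lemma fibre_const_comp_left:
  assumes X: "obC X" and h: "ar h" and a: "ar a" "dm a = FO' X \<otimes> cd h"
  shows "Cmp (fibLS C L F X) (fibre_const X h) ((X, B), (X, D), idC X, a) = ((X, dm h), (X, D), idC X, (idL (FO' X) ** h) ;; a)"
proof -
  note facts = X h a
  have "ctr X ** idL (dm h) ;; (idL (FO' X) ** (wk X ** h)) ;; a
      = ctr X ** idL (dm h) ;; (((idL (FO' X) ** wk X) ** h) ;; a)"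
    using facts by (simp add: cat_typing cat_simps)
  also have "\<dots> = (idL (FO' X) ** h) ;; a"
    by (subst L.interchange_rev_comp) (use facts in \<open>simp_all add: ctr_wk_left cat_typing cat_simps\<close>)
  finally show ?thesis
    using facts by (simp add: fibLS_def LSC_def fibre_const_def cat_typing cat_simps)
qed

lemma fibre_const_comp:
  assumes "obC X" "ar h" "ar k" "cd h = dm k"
  shows "Cmp (fibLS C L F X) (fibre_const X h) (fibre_const X k) = fibre_const X (h ;; k)"
  using fibre_const_comp_right[of X "dm h" "wk X ** h" k] assms
  by (simp add: fibre_const_def L.tensor_to_unit_comp cat_typing cat_simps)

lemma fibre_const_tensor:
  assumes X: "obC X" and h: "ar h" and k: "ar k"
  shows "TenA (fibLS C L F X) (fibre_const X h) (fibre_const X k) = fibre_const X (h ** k)"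
proof -
  let ?A = "dm h" and ?A' = "dm k" and ?s = "Sym L (FO' X) (dm h)"
  note facts = X h k
  have swap: "?s ;; (h ** wk X) = wk X ** h"
    using L.sym_natural[of "wk X" h] facts by (simp add: L.sym_unit cat_typing cat_simps)
  have "(?s ;; (h ** wk X)) ** k = (?s ** idL ?A') ;; (h ** (wk X ** k))"
    using L.interchange[of ?s "h ** wk X" "idL ?A'" k] facts by (simp add: cat_typing cat_simps)
  then have "((idL (FO' X) ** ?s) ** idL ?A') ;; ((wk X ** h) ** (wk X ** k)) = (wk X ** wk X) ** (h ** k)"
    using facts by (simp add: swap L.interchange_rev cat_typing cat_simps)
  then have "ctr X ** idL (?A \<otimes> ?A') ;; ((idL (FO' X) ** ?s) ** idL ?A') ;; ((wk X ** h) ** (wk X ** k))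
      = ctr X ** idL (?A \<otimes> ?A') ;; ((wk X ** wk X) ** (h ** k))"
    using facts by (simp add: cat_typing cat_simps)
  also have "\<dots> = wk X ** (h ** k)"
    by (subst L.interchange_rev) (use facts in \<open>simp_all add: ctr_wk_wk cat_typing cat_simps\<close>)
  finally show ?thesis
    using facts by (simp add: fibLS_def fibre_const_def cat_typing cat_simps)
qed

lemma fibre_const_id: "obC X \<Longrightarrow> ob A \<Longrightarrow> Idt (fibLS C L F X) (X, A) = fibre_const X (idL A)"
  by (simp add: fibLS_def LSC_def fibre_const_def cat_typing)

lemma fibre_const_sym: "obC X \<Longrightarrow> ob A \<Longrightarrow> ob B \<Longrightarrow> Sym (fibLS C L F X) (X, A) (X, B) = fibre_const X (Sym L A B)"
  by (simp add: fibLS_def fibre_const_def cat_typing)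

lemma FS_unit_eq: "obC X \<Longrightarrow> FS_unit C L F X = fibre_const X (mU F)"
  using L.tensor_to_unit_comp[of "wk X" "idL \<one>" "mU F"]
  by (simp add: FS_unit_def fibre_const_def cat_typing cat_simps)

lemma FS_tensor_eq:
  "obC X \<Longrightarrow> obC J \<Longrightarrow> obC K \<Longrightarrow> FS_tensor C L F X (X, J) (X, K) = fibre_const X (mT F J K)"
  using L.tensor_to_unit_comp[of "wk X" "idL (FO' J \<otimes> FO' K)" "mT F J K"]
  by (simp add: FS_tensor_def fibre_const_def cat_typing cat_simps)

lemma SC_arrE:
  assumes "a \<in> Arr (SC C)"
  obtains X J Y K f u where "a = ((X, J), (Y, K), f, u)" "obC X" "obC J" "obC Y" "obC K"
    "arC f" "dmC f = X" "cdC f = Y" "arC u" "dmC u = X \<times>c J" "cdC u = K"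
  using assms unfolding SC_def hom_def by auto

lemma FSm_apply: "FSm L F ((X, J), (Y, K), f, u) = ((X, FO' J), (Y, FO' K), f, mT F X J ;; FA' u)"
  unfolding FSm_def by simp

lemma FSo_apply: "FSo F (X, J) = (X, FO' J)"
  unfolding FSo_def by simp

lemma FS_functor: "functor (SC C) (LSC C L F) (FSo F) (FSm L F)"
  unfolding functor_def
proof (intro conjI ballI impI)
  fix A assume "A \<in> Obj (SC C)"
  then show "FSo F A \<in> Obj (LSC C L F)"
    by (auto simp: SC_def LSC_def FSo_def cat_typing)
next
  fix a assume "a \<in> Arr (SC C)"
  then show "FSm L F a \<in> hom (LSC C L F) (FSo F (Dom (SC C) a)) (FSo F (Cod (SC C) a))"
    by (rule SC_arrE) (auto simp: SC_def LSC_def FSo_apply FSm_apply hom_def cat_typing)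
next
  fix A assume "A \<in> Obj (SC C)"
  then obtain X J where "A = (X, J)" "obC X" "obC J"
    by (auto simp: SC_def)
  then show "FSm L F (Idt (SC C) A) = Idt (LSC C L F) (FSo F A)"
    by (simp add: SC_def LSC_def FSo_apply FSm_apply mT_FA_pr2)
next
  fix a b assume a: "a \<in> Arr (SC C)" and b: "b \<in> Arr (SC C)" and ab: "Cod (SC C) a = Dom (SC C) b"
  obtain X J Y K f u where a_def: "a = ((X, J), (Y, K), f, u)" and "obC X" "obC J" "obC Y" "obC K"
    "arC f" "dmC f = X" "cdC f = Y" "arC u" "dmC u = X \<times>c J" "cdC u = K"
    using a by (rule SC_arrE)
  moreover obtain Y' K' Z M g v where b_def: "b = ((Y', K'), (Z, M), g, v)" and "obC Z" "obC M"
    "arC g" "dmC g = Y'" "cdC g = Z" "arC v" "dmC v = Y' \<times>c K'" "cdC v = M"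
    using b by (rule SC_arrE)
  moreover have "Y' = Y" "K' = K"
    using ab a_def b_def by (auto simp: SC_def)
  ultimately show "FSm L F (Cmp (SC C) a b) = Cmp (LSC C L F) (FSm L F a) (FSm L F b)"
    by (simp add: SC_def LSC_def FSm_apply mT_FA_simple_comp)
qed

lemma FSm_base_arr: "a \<in> Arr (SC C) \<Longrightarrow> base_arr (FSm L F a) = base_arr a"
  by (erule SC_arrE) (simp add: FSm_apply base_arr_def)

lemma FSm_cartS: "arC f \<Longrightarrow> obC K \<Longrightarrow> FSm L F (cartS C f K) = cartLS C L F f (FO' K)"
  by (simp add: cartS_def cartLS_def FSm_apply mT_FA_pr2 cat_typing)

lemma fibS_objE:
  assumes "A \<in> Obj (fibS C X)"
  obtains J where "A = (X, J)" "obC J"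
  using assms by (auto simp: fibS_def)

lemma fibS_arrE:
  assumes "a \<in> Arr (fibS C X)"
  obtains J J' u where "a = ((X, J), (X, J'), idC X, u)" "obC X" "obC J" "obC J'"
    "arC u" "dmC u = X \<times>c J" "cdC u = J'"
  using assms unfolding fibS_def SC_def hom_def base_arr_def by auto

lemma FS_fibre_functor:
  assumes X: "obC X"
  shows "functor (fibS C X) (fibLS C L F X) (FSo F) (FSm L F)"
  unfolding functor_def
proof (intro conjI ballI impI)
  fix A assume "A \<in> Obj (fibS C X)"
  then show "FSo F A \<in> Obj (fibLS C L F X)"
    by (auto simp: fibS_def fibLS_def FSo_def cat_typing)
next
  fix a assume "a \<in> Arr (fibS C X)"
  then show "FSm L F a \<in> hom (fibLS C L F X) (FSo F (Dom (fibS C X) a)) (FSo F (Cod (fibS C X) a))"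
    by (rule fibS_arrE) (auto simp: fibS_def fibLS_def LSC_def SC_def FSo_apply FSm_apply hom_def base_arr_def cat_typing)
next
  fix A assume "A \<in> Obj (fibS C X)"
  then obtain J where "A = (X, J)" "obC J"
    by (rule fibS_objE)
  then show "FSm L F (Idt (fibS C X) A) = Idt (fibLS C L F X) (FSo F A)"
    using X by (simp add: fibS_def fibLS_def SC_def LSC_def FSo_apply FSm_apply mT_FA_pr2)
next
  fix a b assume "a \<in> Arr (fibS C X)" "b \<in> Arr (fibS C X)" "Cod (fibS C X) a = Dom (fibS C X) b"
  then have "FSm L F (Cmp (SC C) a b) = Cmp (LSC C L F) (FSm L F a) (FSm L F b)"
    using FS_functor unfolding functor_def by (auto simp: fibS_def)
  then show "FSm L F (Cmp (fibS C X) a b) = Cmp (fibLS C L F X) (FSm L F a) (FSm L F b)"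
    by (simp add: fibS_def fibLS_def)
qed

lemma FS_tensor_natural:
  assumes X: "obC X" and f: "f \<in> Arr (fibS C X)" and g: "g \<in> Arr (fibS C X)"
  shows "Cmp (fibLS C L F X) (TenA (fibLS C L F X) (FSm L F f) (FSm L F g))
      (FS_tensor C L F X (Cod (fibS C X) f) (Cod (fibS C X) g)) =
    Cmp (fibLS C L F X) (FS_tensor C L F X (Dom (fibS C X) f) (Dom (fibS C X) g))
      (FSm L F (TenA (fibS C X) f g))"
proof -
  obtain J J' u where f_def: "f = ((X, J), (X, J'), idC X, u)"
    and f_facts: "obC J" "obC J'" "arC u" "dmC u = X \<times>c J" "cdC u = J'"
    using f by (rule fibS_arrE)
  obtain K K' v where g_def: "g = ((X, K), (X, K'), idC X, v)"
    and g_facts: "obC K" "obC K'" "arC v" "dmC v = X \<times>c K" "cdC v = K'"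
    using g by (rule fibS_arrE)
  note facts = f_facts g_facts X
  let ?U = "((diag C X *c idC (J \<times>c K)) ;c ((idC X *c csym C X J) *c idC K)) ;c (u *c v)"
  have "TenA (fibLS C L F X) (FSm L F f) (FSm L F g) = ((X, FO' J \<otimes> FO' K), (X, FO' J' \<otimes> FO' K'), idC X,
      ctr X ** idL (FO' J \<otimes> FO' K) ;; ((idL (FO' X) ** Sym L (FO' X) (FO' J)) ** idL (FO' K))
        ;; ((mT F X J ;; FA' u) ** (mT F X K ;; FA' v)))"
    by (simp add: f_def g_def fibLS_def FSm_apply)
  moreover have "FSm L F (TenA (fibS C X) f g) =
      ((X, FO' (J \<times>c K)), (X, FO' (J' \<times>c K')), idC X, mT F X (J \<times>c K) ;; FA' ?U)"
    by (simp add: f_def g_def fibS_def FSm_apply)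
  ultimately show ?thesis
    using facts
    by (simp add: f_def g_def fibS_def SC_def FS_tensor_eq fibre_const_comp_right fibre_const_comp_left
        mT_FA_fibre_tensor cat_typing)
qed

lemma FS_tensor_assoc:
  assumes "obC X" "obC J" "obC K" "obC M"
  shows "Cmp (fibLS C L F X)
      (TenA (fibLS C L F X) (FS_tensor C L F X (X, J) (X, K)) (Idt (fibLS C L F X) (FSo F (X, M))))
      (FS_tensor C L F X (Ten (fibS C X) (X, J) (X, K)) (X, M)) =
    Cmp (fibLS C L F X)
      (TenA (fibLS C L F X) (Idt (fibLS C L F X) (FSo F (X, J))) (FS_tensor C L F X (X, K) (X, M)))
      (FS_tensor C L F X (X, J) (Ten (fibS C X) (X, K) (X, M)))"
  using assms
  by (simp add: fibS_def FSo_apply FS_tensor_eq fibre_const_id fibre_const_tensor fibre_const_comp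
      mT_assoc cat_typing)

lemma FS_unit_left:
  assumes "obC X" "obC J"
  shows "Cmp (fibLS C L F X) (TenA (fibLS C L F X) (FS_unit C L F X) (Idt (fibLS C L F X) (FSo F (X, J))))
      (FS_tensor C L F X (Unit (fibS C X)) (X, J)) = Idt (fibLS C L F X) (FSo F (X, J))"
  using assms
  by (simp add: fibS_def FSo_apply FS_unit_eq FS_tensor_eq fibre_const_id fibre_const_tensor fibre_const_comp
      mT_unit_left cat_typing)

lemma FS_unit_right:
  assumes "obC X" "obC J"
  shows "Cmp (fibLS C L F X) (TenA (fibLS C L F X) (Idt (fibLS C L F X) (FSo F (X, J))) (FS_unit C L F X))
      (FS_tensor C L F X (X, J) (Unit (fibS C X))) = Idt (fibLS C L F X) (FSo F (X, J))"
  using assms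
  by (simp add: fibS_def FSo_apply FS_unit_eq FS_tensor_eq fibre_const_id fibre_const_tensor fibre_const_comp
      mT_unit_right cat_typing)

lemma FS_tensor_sym:
  assumes X: "obC X" and J: "obC J" and K: "obC K"
  shows "Cmp (fibLS C L F X) (FS_tensor C L F X (X, J) (X, K)) (FSm L F (Sym (fibS C X) (X, J) (X, K))) =
    Cmp (fibLS C L F X) (Sym (fibLS C L F X) (FSo F (X, J)) (FSo F (X, K))) (FS_tensor C L F X (X, K) (X, J))"
proof -
  note facts = X J K
  have "(idL (FO' X) ** mT F J K) ;; (mT F X (J \<times>c K) ;; FA' (Pr2 C X (J \<times>c K) ;c csym C J K))
      = ((idL (FO' X) ** mT F J K) ;; (wk X ** idL (FO' (J \<times>c K)))) ;; FA' (csym C J K)"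
    using facts by (simp add: FA_comp mT_FA_pr2[symmetric] cat_typing cat_simps)
  also have "\<dots> = wk X ** (mT F J K ;; FA' (csym C J K))"
    using facts by (simp add: L.interchange_rev L.tensor_to_unit_comp cat_typing cat_simps)
  also have "\<dots> = wk X ** (Sym L (FO' J) (FO' K) ;; mT F K J)"
    using facts by (simp add: mT_sym)
  finally have swap: "(idL (FO' X) ** mT F J K) ;; (mT F X (J \<times>c K) ;; FA' (Pr2 C X (J \<times>c K) ;c csym C J K))
      = wk X ** (Sym L (FO' J) (FO' K) ;; mT F K J)" .
  have "FSm L F (Sym (fibS C X) (X, J) (X, K)) =
      ((X, FO' (J \<times>c K)), (X, FO' (K \<times>c J)), idC X, mT F X (J \<times>c K) ;; FA' (Pr2 C X (J \<times>c K) ;c csym C J K))"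
    by (simp add: fibS_def FSm_apply)
  then have "Cmp (fibLS C L F X) (FS_tensor C L F X (X, J) (X, K)) (FSm L F (Sym (fibS C X) (X, J) (X, K)))
      = fibre_const X (Sym L (FO' J) (FO' K) ;; mT F K J)"
    using facts by (simp add: FS_tensor_eq fibre_const_comp_left swap cat_typing) (simp add: fibre_const_def cat_typing)
  also have "\<dots> = Cmp (fibLS C L F X) (Sym (fibLS C L F X) (FSo F (X, J)) (FSo F (X, K))) (FS_tensor C L F X (X, K) (X, J))"
    using facts by (simp add: FSo_apply FS_tensor_eq fibre_const_sym fibre_const_comp cat_typing)
  finally show ?thesis .
qed

lemma FS_fibre_sym_lax_monoidal:
  assumes X: "obC X"
  shows "sym_lax_monoidal_functor (fibS C X) (fibLS C L F X) (FSo F) (FSm L F)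
    (FS_unit C L F X) (FS_tensor C L F X)"
proof -
  have "FS_unit C L F X \<in> hom (fibLS C L F X) (Unit (fibLS C L F X)) (FSo F (Unit (fibS C X)))"
    and "\<forall>A\<in>Obj (fibS C X). \<forall>B\<in>Obj (fibS C X). FS_tensor C L F X A B \<in>
      hom (fibLS C L F X) (Ten (fibLS C L F X) (FSo F A) (FSo F B)) (FSo F (Ten (fibS C X) A B))"
    using X by (auto elim!: fibS_objE
        simp: fibS_def fibLS_def LSC_def FS_unit_def FS_tensor_def FSo_def hom_def base_arr_def cat_typing)
  then show ?thesis
    unfolding sym_lax_monoidal_functor_def
    using X FS_fibre_functor FS_tensor_natural
    by (auto elim!: fibS_objE intro: FS_tensor_assoc FS_unit_left FS_unit_right FS_tensor_sym)
qed

end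

theorem proposition3p14:
  fixes C :: "('o,'m,'z1) ccat_scheme" and L :: "('p,'n,'z2) smcat_scheme"
    and F :: "('o,'m,'p,'n) lnl_data"
  assumes "lnl_adjunction C L F"
  shows "functor (SC C) (LSC C L F) (FSo F) (FSm L F)
    \<and> (\<forall>A\<in>Obj (SC C). fst (FSo F A) = fst A)
    \<and> (\<forall>a\<in>Arr (SC C). base_arr (FSm L F a) = base_arr a)
    \<and> (\<forall>f\<in>Arr C. \<forall>K\<in>Obj C. FSm L F (cartS C f K) = cartLS C L F f (FO F K))
    \<and> (\<forall>X\<in>Obj C. sym_lax_monoidal_functor (fibS C X) (fibLS C L F X) (FSo F) (FSm L F)
          (FS_unit C L F X) (FS_tensor C L F X))"
proof -
  interpret strong_sym_monoidal_functor C L F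
    using assms by (rule lnl_adjunction_strong_sym_monoidal)
  show ?thesis
    using FS_functor FSm_base_arr FSm_cartS FS_fibre_sym_lax_monoidal
    by (auto simp: FSo_def)
qed

end
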